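(* Let $S_{\mathrm{even}}$ (resp. $S_{\mathrm{odd}}$) be the set of the 24 consonant triads whose root is even (resp. odd). The functions $L$ and $R$ map $S_{\mathrm{even}}$ to itself and $S_{\mathrm{odd}}$ to itself, and the group of permutations of $S_{\mathrm{even}}$ generated by the restrictions of $L$ and $R$ is isomorphic to the dihedral group $D_{12}$ of order 24; likewise the group of permutations of $S_{\mathrm{odd}}$ generated by the restrictions of $L$ and $R$ is isomorphic to $D_{12}$.
   Context: Pitch classes are elements of $\mathbb{Z}_{24}$ (even residues: original tones; odd residues: new tones). For $n\in\mathbb{Z}_{24}$, $I_n(y)=-y+n\pmod{24}$, applied componentwise to ordered triples. Consonant triads are written as ordered triples: the major triad with root $x$ is $\langle x,x+8,x+14\rangle$ and the minor triad with root $x$ is $\langle x+14,x+6,x\rangle$ (underlying sets $\{x,x+8,x+14\}$ and $\{x,x+6,x+14\}$); there are 48 consonant triads. Define $L\langle y_1,y_2,y_3\rangle=I_{y_2+y_3}\langle y_1,y_2,y_3\rangle$ and $R\langle y_1,y_2,y_3\rangle=I_{y_1+y_2}\langle y_1,y_2,y_3\rangle$, which send consonant triads to consonant triads. $D_{12}$ denotes the group $\langle x,y\mid x^{12}=y^2=1,\ yxy=x^{-1}\rangle$ of order 24. *)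

theory Defs
  imports "HOL-Algebra.Algebra"
begin

text \<open>Pitch classes in Z_24 are represented by integers in {0..23}; arithmetic is taken mod 24.
  Ordered triads are triples of such integers.\<close>

type_synonym triad = "int \<times> int \<times> int"

definition Inv :: "int \<Rightarrow> int \<Rightarrow> int" where
  "Inv n y = (n - y) mod 24"

definition Inv3 :: "int \<Rightarrow> triad \<Rightarrow> triad" where
  "Inv3 n t = (case t of (y1, y2, y3) \<Rightarrow> (Inv n y1, Inv n y2, Inv n y3))"

definition major_triad :: "int \<Rightarrow> triad" where
  "major_triad x = (x mod 24, (x + 8) mod 24, (x + 14) mod 24)"

definition minor_triad :: "int \<Rightarrow> triad" where
  "minor_triad x = ((x + 14) mod 24, (x + 6) mod 24, x mod 24)"

definition consonant_triads :: "triad set" where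
  "consonant_triads = major_triad ` {0..23} \<union> minor_triad ` {0..23}"

definition S_even :: "triad set" where
  "S_even = major_triad ` {x \<in> {0..23}. even x} \<union> minor_triad ` {x \<in> {0..23}. even x}"

definition S_odd :: "triad set" where
  "S_odd = major_triad ` {x \<in> {0..23}. odd x} \<union> minor_triad ` {x \<in> {0..23}. odd x}"

definition L_op :: "triad \<Rightarrow> triad" where
  "L_op t = (case t of (y1, y2, y3) \<Rightarrow> Inv3 (y2 + y3) (y1, y2, y3))"

definition R_op :: "triad \<Rightarrow> triad" where
  "R_op t = (case t of (y1, y2, y3) \<Rightarrow> Inv3 (y1 + y2) (y1, y2, y3))"

definition LR_group :: "triad set \<Rightarrow> (triad \<Rightarrow> triad) monoid" where
  "LR_group S = (BijGroup S)\<lparr>carrier := generate (BijGroup S) {restrict L_op S, restrict R_op S}\<rparr>"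

text \<open>The dihedral group D_12 = <x,y | x^12 = y^2 = 1, yxy = x^-1> of order 24,
  realised concretely: (k, b) stands for x^k y^b with k in {0..11}.\<close>
definition D12 :: "(int \<times> bool) monoid" where
  "D12 = \<lparr>carrier = {0..11} \<times> (UNIV :: bool set),
          monoid.mult = (\<lambda>p q. ((fst p + (if snd p then - fst q else fst q)) mod 12, snd p \<noteq> snd q)),
          monoid.one = (0, False)\<rparr>"

end

theory Submission
  imports Defs
begin

(* Coordinatize the consonant triads by Z_24 \<times> bool: (c, False) is the major triad with root c and
   (c, True) the minor triad with root 8 - c. In these coordinates L and R are the reflections
   c \<mapsto> -c and c \<mapsto> 14 - c, each switching the mode, so both preserve the parity of c and RL is
   the rotation c \<mapsto> c + 14, of order 12 in Z_24. Hence x^k y^b \<mapsto> (RL)^k L^b is a homomorphism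
   from D12 into the permutations of either parity class; it is injective because already the
   orbit of a single triad has 24 elements, and its image is generated by L = y and R = xy. *)

lemma Inv_mod: "Inv (a mod 24 + b mod 24) (c mod 24) = (a + b - c) mod 24"
  unfolding Inv_def by (rule mod_diff_cong) (simp_all add: mod_add_eq)

lemma L_op_mod: "L_op (a mod 24, b mod 24, c mod 24) = ((b + c - a) mod 24, c mod 24, b mod 24)"
  by (simp add: L_op_def Inv3_def Inv_mod)

lemma R_op_mod: "R_op (a mod 24, b mod 24, c mod 24) = (b mod 24, a mod 24, (a + b - c) mod 24)"
  by (simp add: R_op_def Inv3_def Inv_mod)

definition consonant_triad :: "int \<times> bool \<Rightarrow> triad" where
  "consonant_triad p = (if snd p then minor_triad (8 - fst p) else major_triad (fst p))"

lemma consonant_triad_simps: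
  "consonant_triad (c, False) = major_triad c"
  "consonant_triad (c, True) = minor_triad (8 - c)"
  by (simp_all add: consonant_triad_def)

lemma major_triad_ne_minor_triad: "major_triad x \<noteq> minor_triad y"
proof
  assume "major_triad x = minor_triad y"
  then have "((x + 8) mod 24 - x mod 24) mod 24 = ((y + 6) mod 24 - (y + 14) mod 24) mod 24"
    by (simp add: major_triad_def minor_triad_def)
  then show False by (simp add: mod_diff_eq)
qed

lemma consonant_triad_eq_iff:
  "consonant_triad (c, s) = consonant_triad (c', s') \<longleftrightarrow> c mod 24 = c' mod 24 \<and> s = s'"
  by (cases s; cases s')
    (simp_all add: consonant_triad_simps major_triad_ne_minor_triad major_triad_ne_minor_triad[symmetric],
     auto simp: major_triad_def minor_triad_def mod_eq_dvd_iff dvd_diff_commute)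

lemma major_triad_mod: "major_triad (x mod 24) = major_triad x"
  by (simp add: major_triad_def mod_simps)

lemma minor_triad_mod: "minor_triad (x mod 24) = minor_triad x"
  by (simp add: minor_triad_def mod_simps)

lemma L_op_consonant_triad: "L_op (consonant_triad (c, s)) = consonant_triad (- c, \<not> s)"
  by (cases s) (simp_all add: consonant_triad_simps major_triad_def minor_triad_def L_op_mod add.commute)

lemma R_op_consonant_triad: "R_op (consonant_triad (c, s)) = consonant_triad (14 - c, \<not> s)"
  by (cases s) (simp_all add: consonant_triad_simps major_triad_def minor_triad_def R_op_mod add.commute)

lemma even_mod_even_iff: "even m \<Longrightarrow> even (x mod m) \<longleftrightarrow> even (x :: int)"
  by (simp add: even_iff_mod_2_eq_zero mod_mod_cancel)

definition parity_triads :: "int \<Rightarrow> triad set" where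
  "parity_triads c0 = consonant_triad ` ({c. even (c - c0)} \<times> UNIV)"

lemma parity_triads_eq_roots:
  "parity_triads c0 =
     major_triad ` {x \<in> {0..23}. even (x - c0)} \<union> minor_triad ` {x \<in> {0..23}. even (x - c0)}"
proof (intro equalityI subsetI)
  fix t assume "t \<in> parity_triads c0"
  then obtain c s where t: "t = consonant_triad (c, s)" and c: "even (c - c0)"
    by (auto simp: parity_triads_def)
  show "t \<in> major_triad ` {x \<in> {0..23}. even (x - c0)} \<union> minor_triad ` {x \<in> {0..23}. even (x - c0)}"
  proof (cases s)
    case False
    then have "t = major_triad (c mod 24)" by (simp add: t consonant_triad_simps major_triad_mod)
    then show ?thesis using c by (auto simp: even_mod_even_iff)
  next
    case True
    then have "t = minor_triad ((8 - c) mod 24)" by (simp add: t consonant_triad_simps minor_triad_mod)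
    then show ?thesis using c by (auto simp: even_mod_even_iff)
  qed
next
  fix t assume "t \<in> major_triad ` {x \<in> {0..23}. even (x - c0)} \<union> minor_triad ` {x \<in> {0..23}. even (x - c0)}"
  then obtain x where x: "even (x - c0)" and "t = major_triad x \<or> t = minor_triad x"
    by auto
  moreover have "major_triad x = consonant_triad (x, False)" "minor_triad x = consonant_triad (8 - x, True)"
    by (simp_all add: consonant_triad_simps)
  moreover have "consonant_triad (x, False) \<in> parity_triads c0" "consonant_triad (8 - x, True) \<in> parity_triads c0"
    using x unfolding parity_triads_def by (intro imageI; simp)+
  ultimately show "t \<in> parity_triads c0" by auto
qed

lemma L_op_mem_parity_triads: "t \<in> parity_triads c0 \<Longrightarrow> L_op t \<in> parity_triads c0"
  by (auto simp: parity_triads_def L_op_consonant_triad)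

lemma R_op_mem_parity_triads: "t \<in> parity_triads c0 \<Longrightarrow> R_op t \<in> parity_triads c0"
  by (auto simp: parity_triads_def R_op_consonant_triad)

lemma carrier_D12: "carrier D12 = {0..11} \<times> UNIV"
  by (simp add: D12_def)

lemma mult_D12: "(k1, b1) \<otimes>\<^bsub>D12\<^esub> (k2, b2) = ((k1 + (if b1 then - k2 else k2)) mod 12, b1 \<noteq> b2)"
  by (simp add: D12_def)

lemma one_D12: "\<one>\<^bsub>D12\<^esub> = (0, False)"
  by (simp add: D12_def)

lemma group_D12: "group D12"
proof (rule groupI)
  fix p q r assume "p \<in> carrier D12" "q \<in> carrier D12" "r \<in> carrier D12"
  then show "p \<otimes>\<^bsub>D12\<^esub> q \<otimes>\<^bsub>D12\<^esub> r = p \<otimes>\<^bsub>D12\<^esub> (q \<otimes>\<^bsub>D12\<^esub> r)"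
    by (cases p; cases q; cases r) (auto simp: D12_def mod_simps algebra_simps)
next
  fix p assume p: "p \<in> carrier D12"
  obtain k b where "p = (k, b)" by fastforce
  then have "(if b then k else - k mod 12, b) \<otimes>\<^bsub>D12\<^esub> p = \<one>\<^bsub>D12\<^esub>"
    by (simp add: mult_D12 one_D12 mod_simps)
  moreover have "(if b then k else - k mod 12, b) \<in> carrier D12"
  proof -
    have "- k mod 12 \<le> 11" using pos_mod_bound[of 12 "- k"] by linarith
    then show ?thesis using p \<open>p = (k, b)\<close> by (simp add: carrier_D12)
  qed
  ultimately show "\<exists>q\<in>carrier D12. q \<otimes>\<^bsub>D12\<^esub> p = \<one>\<^bsub>D12\<^esub>" by blast
qed (auto simp: D12_def)

lemma D12_generated_by_reflections: "generate D12 {(0, True), (1, True)} = carrier D12"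
proof
  show "generate D12 {(0, True), (1, True)} \<subseteq> carrier D12"
    by (rule group.generate_incl[OF group_D12]) (simp add: carrier_D12)
next
  let ?gen = "generate D12 {(0, True), (1, True)}"
  have refl0: "(0, True) \<in> ?gen" and refl1: "(1, True) \<in> ?gen"
    by (simp_all add: generate.incl)
  have "(1, False) \<in> ?gen"
    using generate.eng[OF refl1 refl0] by (simp add: mult_D12)
  then have rot: "(int n mod 12, False) \<in> ?gen" for n
  proof (induction n)
    case 0
    show ?case using generate.one[of D12] by (simp add: one_D12)
  next
    case (Suc n)
    then show ?case using generate.eng[OF \<open>(1, False) \<in> ?gen\<close> Suc.IH] by (simp add: mult_D12 mod_simps add.commute)
  qed
  show "carrier D12 \<subseteq> ?gen"
  proof (clarsimp simp: carrier_D12)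
    fix k :: int and b assume k: "0 \<le> k" "k \<le> 11"
    then have "(k, False) \<in> ?gen" using rot[of "nat k"] by simp
    moreover have "(k, True) = (k, False) \<otimes>\<^bsub>D12\<^esub> (0, True)" using k by (simp add: mult_D12)
    ultimately show "(k, b) \<in> ?gen" using generate.eng[OF _ refl0] by (cases b) auto
  qed
qed

lemma mult_14_mod_24_eq_iff: "(14 * a) mod 24 = (14 * b) mod 24 \<longleftrightarrow> a mod 12 = (b :: int) mod 12"
proof -
  have "(14 * a) mod 24 = (14 * b) mod 24 \<longleftrightarrow> 2 * 12 dvd 2 * (7 * (a - b))"
    by (simp add: mod_eq_dvd_iff algebra_simps)
  also have "\<dots> \<longleftrightarrow> 12 dvd 7 * (a - b)"
    by (rule dvd_times_left_cancel_iff) simp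
  also have "\<dots> \<longleftrightarrow> 12 dvd a - b"
    by (rule coprime_dvd_mult_right_iff) (simp add: coprime_iff_gcd_eq_1 gcd_non_0_int)
  finally show ?thesis by (simp add: mod_eq_dvd_iff)
qed

lemma consonant_triad_rotation_mod_12:
  "consonant_triad (14 * (k mod 12) + c, s) = consonant_triad (14 * k + c, s)"
  "consonant_triad (14 * (k mod 12) - c, s) = consonant_triad (14 * k - c, s)"
  unfolding consonant_triad_eq_iff
  by (intro conjI refl mod_add_cong mod_diff_cong; simp add: mult_14_mod_24_eq_iff)+

definition dihedral_act :: "int \<times> bool \<Rightarrow> triad \<Rightarrow> triad" where
  "dihedral_act p = (R_op \<circ> L_op) ^^ nat (fst p) \<circ> (if snd p then L_op else id)"

lemma RL_pow_consonant_triad: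
  "((R_op \<circ> L_op) ^^ n) (consonant_triad (c, s)) = consonant_triad (14 * int n + c, s)"
  by (induction n) (simp_all add: L_op_consonant_triad R_op_consonant_triad algebra_simps)

lemma dihedral_act_consonant_triad:
  assumes "0 \<le> k"
  shows "dihedral_act (k, b) (consonant_triad (c, s))
           = consonant_triad (14 * k + (if b then - c else c), s \<noteq> b)"
  using assms by (simp add: dihedral_act_def L_op_consonant_triad RL_pow_consonant_triad)

lemma dihedral_act_one: "dihedral_act \<one>\<^bsub>D12\<^esub> = id"
  by (simp add: one_D12 dihedral_act_def)

lemma dihedral_act_mult:
  assumes "p \<in> carrier D12" "q \<in> carrier D12" "t \<in> range consonant_triad"
  shows "dihedral_act (p \<otimes>\<^bsub>D12\<^esub> q) t = dihedral_act p (dihedral_act q t)"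
proof -
  obtain k1 b1 k2 b2 c s where "p = (k1, b1)" "q = (k2, b2)" "t = consonant_triad (c, s)"
    using assms(3) by (cases p, cases q) auto
  then show ?thesis using assms(1,2)
    by (cases b1; cases b2) (simp_all add: carrier_D12 mult_D12 dihedral_act_consonant_triad
        consonant_triad_rotation_mod_12, simp_all add: algebra_simps)
qed

lemma dihedral_act_mem_parity_triads:
  assumes "p \<in> carrier D12" "t \<in> parity_triads c0"
  shows "dihedral_act p t \<in> parity_triads c0"
proof -
  obtain k b where p: "p = (k, b)" "0 \<le> k"
    using assms(1) by (auto simp: carrier_D12)
  obtain c s where t: "t = consonant_triad (c, s)" and c: "even (c - c0)"
    using assms(2) by (auto simp: parity_triads_def)
  have "even (14 * k + (if b then - c else c) - c0)"
    using c by (cases b) simp_all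
  then show ?thesis
    by (auto simp: p t parity_triads_def dihedral_act_consonant_triad)
qed

definition dihedral_perm :: "int \<Rightarrow> int \<times> bool \<Rightarrow> triad \<Rightarrow> triad" where
  "dihedral_perm c0 p = restrict (dihedral_act p) (parity_triads c0)"

lemma dihedral_perm_in_Bij:
  assumes "p \<in> carrier D12"
  shows "dihedral_perm c0 p \<in> Bij (parity_triads c0)"
proof -
  interpret group D12 by (rule group_D12)
  have cancel: "dihedral_act q (dihedral_act r t) = t"
    if "q \<otimes>\<^bsub>D12\<^esub> r = \<one>\<^bsub>D12\<^esub>" "q \<in> carrier D12" "r \<in> carrier D12" "t \<in> parity_triads c0"
    for q r t
  proof -
    have "t \<in> range consonant_triad"
      using that(4) by (auto simp: parity_triads_def)
    then have "dihedral_act q (dihedral_act r t) = dihedral_act (q \<otimes>\<^bsub>D12\<^esub> r) t"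
      using that(2,3) by (simp add: dihedral_act_mult)
    then show ?thesis
      by (simp add: that(1) dihedral_act_one)
  qed
  have "bij_betw (dihedral_act p) (parity_triads c0) (parity_triads c0)"
  proof (rule bij_betw_byWitness[where f' = "dihedral_act (inv\<^bsub>D12\<^esub> p)"])
    show "\<forall>t\<in>parity_triads c0. dihedral_act (inv\<^bsub>D12\<^esub> p) (dihedral_act p t) = t"
      using cancel[OF l_inv[OF assms] inv_closed[OF assms] assms] by blast
    show "\<forall>t\<in>parity_triads c0. dihedral_act p (dihedral_act (inv\<^bsub>D12\<^esub> p) t) = t"
      using cancel[OF r_inv[OF assms] assms inv_closed[OF assms]] by blast
    show "dihedral_act p ` parity_triads c0 \<subseteq> parity_triads c0"
      "dihedral_act (inv\<^bsub>D12\<^esub> p) ` parity_triads c0 \<subseteq> parity_triads c0"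
      using dihedral_act_mem_parity_triads[OF assms] dihedral_act_mem_parity_triads[OF inv_closed[OF assms]]
      by blast+
  qed
  then show ?thesis
    by (simp add: Bij_def dihedral_perm_def)
qed

lemma dihedral_perm_hom: "dihedral_perm c0 \<in> hom D12 (BijGroup (parity_triads c0))"
proof (rule homI)
  fix p assume "p \<in> carrier D12"
  then show "dihedral_perm c0 p \<in> carrier (BijGroup (parity_triads c0))"
    by (simp add: BijGroup_def dihedral_perm_in_Bij)
next
  fix p q assume p: "p \<in> carrier D12" and q: "q \<in> carrier D12"
  have "dihedral_perm c0 (p \<otimes>\<^bsub>D12\<^esub> q) = compose (parity_triads c0) (dihedral_perm c0 p) (dihedral_perm c0 q)"
    unfolding compose_def dihedral_perm_def
  proof (rule restrict_ext)
    fix t assume t: "t \<in> parity_triads c0"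
    then have "t \<in> range consonant_triad"
      by (auto simp: parity_triads_def)
    then show "dihedral_act (p \<otimes>\<^bsub>D12\<^esub> q) t
        = restrict (dihedral_act p) (parity_triads c0) (restrict (dihedral_act q) (parity_triads c0) t)"
      using t p q by (simp add: dihedral_act_mult dihedral_act_mem_parity_triads)
  qed
  then show "dihedral_perm c0 (p \<otimes>\<^bsub>D12\<^esub> q)
      = dihedral_perm c0 p \<otimes>\<^bsub>BijGroup (parity_triads c0)\<^esub> dihedral_perm c0 q"
    by (simp add: BijGroup_def dihedral_perm_in_Bij p q)
qed

lemma inj_on_dihedral_perm: "inj_on (dihedral_perm c0) (carrier D12)"
proof (rule inj_onI)
  fix p q assume p: "p \<in> carrier D12" and q: "q \<in> carrier D12"
    and eq: "dihedral_perm c0 p = dihedral_perm c0 q"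
  obtain k1 b1 k2 b2 where pq: "p = (k1, b1)" "q = (k2, b2)" "k1 \<in> {0..11}" "k2 \<in> {0..11}"
    using p q by (auto simp: carrier_D12)
  have "consonant_triad (c0, False) \<in> parity_triads c0"
    unfolding parity_triads_def by (rule imageI) simp
  then have "dihedral_act p (consonant_triad (c0, False)) = dihedral_act q (consonant_triad (c0, False))"
    using fun_cong[OF eq, of "consonant_triad (c0, False)"] by (simp add: dihedral_perm_def)
  then have "consonant_triad (14 * k1 + (if b1 then - c0 else c0), b1)
      = consonant_triad (14 * k2 + (if b2 then - c0 else c0), b2)"
    using pq by (simp add: dihedral_act_consonant_triad)
  then have "b1 = b2" and "24 dvd 14 * k1 - 14 * k2"
    by (auto simp: consonant_triad_eq_iff mod_eq_dvd_iff split: if_splits)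
  moreover from this(2) have "(14 * k1) mod 24 = (14 * k2) mod 24"
    by (simp add: mod_eq_dvd_iff)
  ultimately show "p = q"
    using pq by (simp add: mult_14_mod_24_eq_iff)
qed

lemma dihedral_perm_reflections:
  "dihedral_perm c0 (0, True) = restrict L_op (parity_triads c0)"
  "dihedral_perm c0 (1, True) = restrict R_op (parity_triads c0)"
  by (auto intro!: restrict_ext simp: dihedral_perm_def parity_triads_def dihedral_act_consonant_triad
      L_op_consonant_triad R_op_consonant_triad)

lemma LR_group_parity_triads_iso: "LR_group (parity_triads c0) \<cong> D12"
proof -
  let ?S = "parity_triads c0"
  interpret group_hom D12 "BijGroup ?S" "dihedral_perm c0"
    by (simp add: group_hom_def group_hom_axioms_def group_D12 group_BijGroup dihedral_perm_hom)
  have "generate (BijGroup ?S) {restrict L_op ?S, restrict R_op ?S} = dihedral_perm c0 ` carrier D12"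
    using generate_img[of "{(0, True), (1, True)}"]
    by (simp add: carrier_D12 D12_generated_by_reflections dihedral_perm_reflections)
  then have "dihedral_perm c0 \<in> iso D12 (LR_group ?S)"
    using dihedral_perm_hom inj_on_dihedral_perm
    by (auto simp: iso_def hom_def bij_betw_def LR_group_def)
  then show ?thesis
    by (rule group.iso_sym[OF group_D12 is_isoI])
qed

theorem mainTheorem7:
  shows "(\<forall>t\<in>S_even. L_op t \<in> S_even) \<and> (\<forall>t\<in>S_even. R_op t \<in> S_even)
       \<and> (\<forall>t\<in>S_odd. L_op t \<in> S_odd) \<and> (\<forall>t\<in>S_odd. R_op t \<in> S_odd)
       \<and> LR_group S_even \<cong> D12 \<and> LR_group S_odd \<cong> D12"
proof -
  have S_even: "S_even = parity_triads 0" and S_odd: "S_odd = parity_triads 1"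
    by (simp_all add: S_even_def S_odd_def parity_triads_eq_roots)
  show ?thesis
    unfolding S_even S_odd
    by (simp add: L_op_mem_parity_triads R_op_mem_parity_triads LR_group_parity_triads_iso)
qed

end
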